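(* Consider a tree power network $(\mathcal{V},\mathcal{E})$, $\mathcal{V}=\{1,\dots,n\}$, with variable voltage magnitudes $\underline{V}_i\le|V_i|\le\overline{V}_i$ ($0<\underline{V}_i\le\overline{V}_i$), angle limits $\underline{\theta}_{ik}\le 0\le\overline{\theta}_{ik}$ with $|\underline{\theta}_{ik}|,|\overline{\theta}_{ik}|<90^\circ$, and bus power upper bounds $P_i\le\overline{P}_i$ (no lower bounds). Let $\mathcal{P}_\theta=\bigcup_{\underline{\mathbf{v}}\le\tilde{\mathbf{v}}\le\overline{\mathbf{v}}}\mathcal{P}_\theta(\tilde{\mathbf{v}})$, $\mathcal{P}=\mathcal{P}_\theta\cap\mathcal{P}_P$, and $\overline{\mathrm{conv}}(\mathcal{P}_\theta)=\bigcup_{\underline{\mathbf{v}}\le\tilde{\mathbf{v}}\le\overline{\mathbf{v}}}\overline{\mathrm{conv}}(\mathcal{P}_\theta(\tilde{\mathbf{v}}))$. Then $$\mathcal{O}(\mathcal{P})=\mathcal{O}(\mathrm{conv}(\mathcal{P}))=\mathcal{O}(\overline{\mathrm{conv}}(\mathcal{P}_\theta)\cap\mathcal{P}_P).$$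
   Context: Each line $(i,k)$ has admittance $y_{ik}=g_{ik}-jb_{ik}$, $g_{ik},b_{ik}\ge0$. $\underline{\mathbf{v}}=(\underline V_1,\dots,\underline V_n)$, $\overline{\mathbf{v}}=(\overline V_1,\dots,\overline V_n)$. For fixed voltage magnitudes $|V_i|=\tilde V_i$, the flows on line $(i,k)$ with $\theta_{ik}=\theta_i-\theta_k$ are $P_{ik}=\tilde V_i^2 g_{ik}+\tilde V_i\tilde V_k b_{ik}\sin\theta_{ik}-\tilde V_i\tilde V_k g_{ik}\cos\theta_{ik}$, $P_{ki}=\tilde V_k^2 g_{ik}-\tilde V_i\tilde V_k b_{ik}\sin\theta_{ik}-\tilde V_i\tilde V_k g_{ik}\cos\theta_{ik}$; $\mathcal{F}_{\theta_{ik}}(\tilde{\mathbf{v}})$ is the set of such $(P_{ik},P_{ki})$ for $\theta_{ik}\in[\underline{\theta}_{ik},\overline{\theta}_{ik}]$. $\mathbf{A}$ is the $n\times2|\mathcal{E}|$ matrix with $A(i,(k,l))=1$ if $i=k$ and $0$ otherwise (so $(\mathbf{A}\mathbf{f})_i=\sum_{k\sim i}P_{ik}$). $\mathcal{P}_\theta(\tilde{\mathbf{v}})=\mathbf{A}\prod_{(i,k)\in\mathcal{E}}\mathcal{F}_{\theta_{ik}}(\tilde{\mathbf{v}})$ and $\mathcal{P}_P=\{\mathbf{p}:P_i\le\overline{P}_i\ \forall i\}$. For a Hermitian $n\times n$ matrix $\mathbf{W}$, $W_{ik}$ is its $(i,k)$ entry and $\mathbf{W}_{ik}$ its $2\times2$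 submatrix on rows/columns $i,k$. $\mathcal{H}_{ik}(\tilde{\mathbf{v}})$ is the set of Hermitian $\mathbf{W}$ with $\mathbf{W}_{ik}$ positive semidefinite, $W_{ii}=\tilde V_i^2$, $W_{kk}=\tilde V_k^2$, and $\tan(\underline{\theta}_{ik})\mathrm{Re}(W_{ik})\le\mathrm{Im}(W_{ik})\le\tan(\overline{\theta}_{ik})\mathrm{Re}(W_{ik})$. With $\mathbf{Y}_{ik}=\begin{bmatrix}y_{ik}&-y_{ik}\\-y_{ik}&y_{ik}\end{bmatrix}$, $\overline{\mathrm{conv}}(\mathcal{F}_{\theta_{ik}}(\tilde{\mathbf{v}}))=\{\mathrm{Re}(\mathrm{diag}(\mathbf{W}_{ik}\mathbf{Y}_{ik}^H)):\mathbf{W}\in\mathcal{H}_{ik}(\tilde{\mathbf{v}})\}$ and $\overline{\mathrm{conv}}(\mathcal{P}_\theta(\tilde{\mathbf{v}}))=\mathbf{A}\prod_{(i,k)}\overline{\mathrm{conv}}(\mathcal{F}_{\theta_{ik}}(\tilde{\mathbf{v}}))$. $\mathcal{O}(\mathcal{A})$ is the set of Pareto-optimal points of $\mathcal{A}$ (no $y\in\mathcal{A}$ with $y\le x$ componentwise, strict in some coordinate); $\mathrm{conv}$ is the convex hull. *)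

theory Defs
  imports "HOL-Analysis.Analysis"
begin

text \<open>Buses are the elements of a finite type 'n (so V = {1..n} with n = CARD('n)).
  Lines are given as a set E of ordered pairs (i,k) (one orientation per line).\<close>

definition undirected_adj :: "('n \<times> 'n) set \<Rightarrow> ('n \<times> 'n) set" where
  "undirected_adj E = E \<union> converse E"

definition is_tree :: "('n::finite \<times> 'n) set \<Rightarrow> bool" where
  "is_tree E \<longleftrightarrow> (\<forall>(i,k)\<in>E. i \<noteq> k \<and> (k,i) \<notin> E)
     \<and> (undirected_adj E)\<^sup>* = UNIV \<and> card E = CARD('n) - 1"

text \<open>Flow P_ik (sending end) and P_ki (receiving end) on line (i,k) with angle difference t.\<close>
definition flow_from :: "real \<Rightarrow> real \<Rightarrow> real \<Rightarrow> real \<Rightarrow> real \<Rightarrow> real" where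
  "flow_from g b Vi Vk t = Vi\<^sup>2 * g + Vi * Vk * b * sin t - Vi * Vk * g * cos t"

definition flow_to :: "real \<Rightarrow> real \<Rightarrow> real \<Rightarrow> real \<Rightarrow> real \<Rightarrow> real" where
  "flow_to g b Vi Vk t = Vk\<^sup>2 * g - Vi * Vk * b * sin t - Vi * Vk * g * cos t"

definition injection ::
  "('n::finite \<times> 'n) set \<Rightarrow> ('n \<Rightarrow> 'n \<Rightarrow> real) \<Rightarrow> ('n \<Rightarrow> 'n \<Rightarrow> real)
   \<Rightarrow> real^'n \<Rightarrow> ('n \<Rightarrow> 'n \<Rightarrow> real) \<Rightarrow> real^'n" where
  "injection E g b v th = (\<chi> i.
      (\<Sum>e\<in>{e\<in>E. fst e = i}. flow_from (g (fst e) (snd e)) (b (fst e) (snd e))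
                                 (v $ fst e) (v $ snd e) (th (fst e) (snd e)))
    + (\<Sum>e\<in>{e\<in>E. snd e = i}. flow_to (g (fst e) (snd e)) (b (fst e) (snd e))
                                 (v $ fst e) (v $ snd e) (th (fst e) (snd e))))"

definition P_theta_v ::
  "('n::finite \<times> 'n) set \<Rightarrow> ('n \<Rightarrow> 'n \<Rightarrow> real) \<Rightarrow> ('n \<Rightarrow> 'n \<Rightarrow> real)
   \<Rightarrow> ('n \<Rightarrow> 'n \<Rightarrow> real) \<Rightarrow> ('n \<Rightarrow> 'n \<Rightarrow> real) \<Rightarrow> real^'n \<Rightarrow> (real^'n) set" where
  "P_theta_v E g b thL thU v =
     {injection E g b v th | th. \<forall>(i,k)\<in>E. thL i k \<le> th i k \<and> th i k \<le> thU i k}"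

definition P_theta ::
  "('n::finite \<times> 'n) set \<Rightarrow> ('n \<Rightarrow> 'n \<Rightarrow> real) \<Rightarrow> ('n \<Rightarrow> 'n \<Rightarrow> real)
   \<Rightarrow> ('n \<Rightarrow> 'n \<Rightarrow> real) \<Rightarrow> ('n \<Rightarrow> 'n \<Rightarrow> real) \<Rightarrow> real^'n \<Rightarrow> real^'n \<Rightarrow> (real^'n) set" where
  "P_theta E g b thL thU vL vU =
     (\<Union>v\<in>{v. \<forall>i. vL $ i \<le> v $ i \<and> v $ i \<le> vU $ i}. P_theta_v E g b thL thU v)"

definition P_theta_relax ::
  "('n::finite \<times> 'n) set \<Rightarrow> ('n \<Rightarrow> 'n \<Rightarrow> real) \<Rightarrow> ('n \<Rightarrow> 'n \<Rightarrow> real)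
   \<Rightarrow> ('n \<Rightarrow> 'n \<Rightarrow> real) \<Rightarrow> ('n \<Rightarrow> 'n \<Rightarrow> real) \<Rightarrow> real^'n \<Rightarrow> real^'n \<Rightarrow> (real^'n) set" where
  "P_theta_relax E g b thL thU vL vU =
     (\<Union>v\<in>{v. \<forall>i. vL $ i \<le> v $ i \<and> v $ i \<le> vU $ i}.
        closure (convex hull (P_theta_v E g b thL thU v)))"

definition P_P :: "real^'n \<Rightarrow> (real^'n) set" where
  "P_P pU = {p. \<forall>i. p $ i \<le> pU $ i}"

definition pareto :: "(real^'n) set \<Rightarrow> (real^'n) set" where
  "pareto A = {x\<in>A. \<not> (\<exists>y\<in>A. (\<forall>i. y $ i \<le> x $ i) \<and> (\<exists>i. y $ i < x $ i))}"

end

theory Submission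
  imports Defs
begin

text \<open>Every convex combination of operating points is dominated componentwise by a single
  operating point: give each bus the quadratic mean of its voltage magnitudes, and each line the
  angle \<open>\<theta>\<close> for which \<open>V\<^sub>i V\<^sub>k sin \<theta>\<close> equals the average of the \<open>V\<^sub>i V\<^sub>k sin \<theta>\<^sub>i\<^sub>k\<close>. The \<open>g V\<^sup>2\<close> and
  \<open>b V\<^sub>i V\<^sub>k sin\<close> parts of both end flows are then averaged exactly, while by Cauchy-Schwarz the
  average of \<open>V\<^sub>i V\<^sub>k cos \<theta>\<^sub>i\<^sub>k\<close> is at most \<open>V\<^sub>i V\<^sub>k cos \<theta>\<close>; as \<open>g \<ge> 0\<close>, no flow increases. The new angle
  obeys the limits because they straddle 0 inside \<open>[-\<pi>/2, \<pi>/2]\<close>, where \<open>sin\<close> is monotone.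
  The relaxation lies between \<open>P_theta\<close> and its convex hull, and the bus limits form a downward
  closed convex set, so none of the three sets has Pareto points the others lack. The argument
  works line by line.\<close>

lemma weighted_Cauchy_Schwarz:
  fixes u a c :: "'a \<Rightarrow> real"
  assumes "\<forall>y\<in>S. 0 \<le> u y"
  shows "(\<Sum>y\<in>S. u y * a y * c y)\<^sup>2 \<le> (\<Sum>y\<in>S. u y * (a y)\<^sup>2) * (\<Sum>y\<in>S. u y * (c y)\<^sup>2)"
proof -
  have "(\<Sum>y\<in>S. u y * a y * c y) = (\<Sum>y\<in>S. (sqrt (u y) * a y) * (sqrt (u y) * c y))"
    using assms by (intro sum.cong) (auto simp: algebra_simps)
  moreover have "(\<Sum>y\<in>S. (sqrt (u y) * a y)\<^sup>2) = (\<Sum>y\<in>S. u y * (a y)\<^sup>2)"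
    "(\<Sum>y\<in>S. (sqrt (u y) * c y)\<^sup>2) = (\<Sum>y\<in>S. u y * (c y)\<^sup>2)"
    using assms by (auto intro!: sum.cong simp: power_mult_distrib)
  ultimately show ?thesis
    using Cauchy_Schwarz_ineq_sum[of "\<lambda>y. sqrt (u y) * a y" "\<lambda>y. sqrt (u y) * c y" S] by simp
qed

lemma weighted_cis_sum_bound:
  fixes u a c t :: "'a \<Rightarrow> real"
  assumes "\<forall>y\<in>S. 0 \<le> u y"
  shows "(\<Sum>y\<in>S. u y * a y * c y * cos (t y))\<^sup>2 + (\<Sum>y\<in>S. u y * a y * c y * sin (t y))\<^sup>2
           \<le> (\<Sum>y\<in>S. u y * (a y)\<^sup>2) * (\<Sum>y\<in>S. u y * (c y)\<^sup>2)"
proof -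
  define z where "z = (\<Sum>y\<in>S. complex_of_real (u y * a y * c y) * cis (t y))"
  have "cmod z \<le> (\<Sum>y\<in>S. u y * \<bar>a y\<bar> * \<bar>c y\<bar>)"
    unfolding z_def using assms
    by (intro order_trans[OF norm_sum] sum_mono) (simp add: norm_mult abs_mult)
  then have "(cmod z)\<^sup>2 \<le> (\<Sum>y\<in>S. u y * \<bar>a y\<bar> * \<bar>c y\<bar>)\<^sup>2"
    by (simp add: power_mono)
  also have "\<dots> \<le> (\<Sum>y\<in>S. u y * (a y)\<^sup>2) * (\<Sum>y\<in>S. u y * (c y)\<^sup>2)"
    using weighted_Cauchy_Schwarz[OF assms, of "\<lambda>y. \<bar>a y\<bar>" "\<lambda>y. \<bar>c y\<bar>"] by simp
  finally show ?thesis
    unfolding cmod_power2 z_def by (simp add: Re_sum Im_sum cis.sel)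
qed

lemma sin_weighted_sum_between:
  fixes w t :: "'a \<Rightarrow> real"
  assumes "\<forall>y\<in>S. 0 \<le> w y" and "\<forall>y\<in>S. tL \<le> t y \<and> t y \<le> tU"
    and "- (pi/2) \<le> tL" and "tU \<le> pi/2"
  shows "sin tL * (\<Sum>y\<in>S. w y) \<le> (\<Sum>y\<in>S. w y * sin (t y))"
    and "(\<Sum>y\<in>S. w y * sin (t y)) \<le> sin tU * (\<Sum>y\<in>S. w y)"
  using assms unfolding sum_distrib_left
  by (auto intro!: sum_mono simp: mult.commute[of "sin _"] mult_left_mono sin_mono_le_eq)

lemma arcsin_angle_between:
  fixes m I R :: real
  assumes "0 < m" and "R\<^sup>2 + I\<^sup>2 \<le> m\<^sup>2"
    and "sin tL * m \<le> I" and "I \<le> sin tU * m"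
    and "- (pi/2) \<le> tL" and "tL \<le> tU" and "tU \<le> pi/2"
  defines "\<theta> \<equiv> arcsin (I / m)"
  shows "tL \<le> \<theta> \<and> \<theta> \<le> tU \<and> m * sin \<theta> = I \<and> R \<le> m * cos \<theta>"
proof -
  have "I\<^sup>2 \<le> m\<^sup>2" using assms(2) by (smt (verit) zero_le_power2)
  then have "\<bar>I\<bar> \<le> m" using \<open>0 < m\<close> abs_le_square_iff[of I m] by simp
  then have q: "- 1 \<le> I / m" "I / m \<le> 1" using \<open>0 < m\<close> by (auto simp: field_simps abs_le_iff)
  have "m * cos \<theta> = sqrt (m\<^sup>2 * (1 - (I / m)\<^sup>2))"
    unfolding \<theta>_def using q \<open>0 < m\<close> by (simp add: cos_arcsin real_sqrt_mult)
  also have "m\<^sup>2 * (1 - (I / m)\<^sup>2) = m\<^sup>2 - I\<^sup>2"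
    using \<open>0 < m\<close> by (simp add: field_simps)
  finally have "R \<le> m * cos \<theta>"
    using assms(2) real_sqrt_le_mono[of "R\<^sup>2" "m\<^sup>2 - I\<^sup>2"] by auto
  moreover have "tL \<le> \<theta>" "\<theta> \<le> tU"
    unfolding \<theta>_def using q assms by (auto simp: le_arcsin_iff arcsin_le_iff field_simps)
  moreover have "m * sin \<theta> = I" unfolding \<theta>_def using q \<open>0 < m\<close> by simp
  ultimately show ?thesis by blast
qed

lemma quadratic_mean_between:
  fixes u x :: "'a \<Rightarrow> real"
  assumes u: "\<forall>y\<in>S. 0 \<le> u y" "sum u S = 1"
    and "0 \<le> lo" and x: "\<forall>y\<in>S. lo \<le> x y \<and> x y \<le> hi"
  shows "lo \<le> sqrt (\<Sum>y\<in>S. u y * (x y)\<^sup>2) \<and> sqrt (\<Sum>y\<in>S. u y * (x y)\<^sup>2) \<le> hi"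
proof -
  have "S \<noteq> {}" using u(2) by auto
  then have "0 \<le> hi" using x \<open>0 \<le> lo\<close> by force
  have "lo\<^sup>2 = (\<Sum>y\<in>S. u y * lo\<^sup>2)" using u(2) by (simp add: sum_distrib_right[symmetric])
  also have "\<dots> \<le> (\<Sum>y\<in>S. u y * (x y)\<^sup>2)"
    using u(1) x \<open>0 \<le> lo\<close> by (intro sum_mono mult_left_mono power_mono) auto
  finally have "lo \<le> sqrt (\<Sum>y\<in>S. u y * (x y)\<^sup>2)" by (rule real_le_rsqrt)
  have "(\<Sum>y\<in>S. u y * (x y)\<^sup>2) \<le> (\<Sum>y\<in>S. u y * hi\<^sup>2)"
    using u(1) x \<open>0 \<le> lo\<close> by (intro sum_mono mult_left_mono power_mono) auto
  also have "\<dots> = hi\<^sup>2" using u(2) by (simp add: sum_distrib_right[symmetric])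
  finally have "sqrt (\<Sum>y\<in>S. u y * (x y)\<^sup>2) \<le> hi"
    using \<open>0 \<le> hi\<close> real_sqrt_le_mono by fastforce
  with \<open>lo \<le> _\<close> show ?thesis by blast
qed

lemma weighted_sum_flows:
  fixes u a c t :: "'a \<Rightarrow> real"
  shows "(\<Sum>y\<in>S. u y * flow_from g b (a y) (c y) (t y))
           = g * (\<Sum>y\<in>S. u y * (a y)\<^sup>2) + b * (\<Sum>y\<in>S. u y * a y * c y * sin (t y))
             - g * (\<Sum>y\<in>S. u y * a y * c y * cos (t y))" (is ?from)
    and "(\<Sum>y\<in>S. u y * flow_to g b (a y) (c y) (t y))
           = g * (\<Sum>y\<in>S. u y * (c y)\<^sup>2) - b * (\<Sum>y\<in>S. u y * a y * c y * sin (t y))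
             - g * (\<Sum>y\<in>S. u y * a y * c y * cos (t y))" (is ?to)
proof -
  have "u y * flow_from g b (a y) (c y) (t y) = g * (u y * (a y)\<^sup>2)
          + b * (u y * a y * c y * sin (t y)) - g * (u y * a y * c y * cos (t y))"
    and "u y * flow_to g b (a y) (c y) (t y) = g * (u y * (c y)\<^sup>2)
          - b * (u y * a y * c y * sin (t y)) - g * (u y * a y * c y * cos (t y))" for y
    unfolding flow_from_def flow_to_def by (simp_all add: algebra_simps)
  then show ?from ?to
    by (simp_all add: sum_subtractf sum.distrib sum_distrib_left)
qed

lemma averaged_line_flows_dominated:
  fixes u a c t :: "'a \<Rightarrow> real"
  assumes "finite S" and u: "\<forall>y\<in>S. 0 \<le> u y" "sum u S = 1"
    and ac: "\<forall>y\<in>S. 0 < a y \<and> 0 < c y" and t: "\<forall>y\<in>S. tL \<le> t y \<and> t y \<le> tU"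
    and tL: "- (pi/2) \<le> tL" "tL \<le> 0" and tU: "0 \<le> tU" "tU \<le> pi/2"
    and "0 \<le> g" "0 \<le> b"
  defines "A \<equiv> sqrt (\<Sum>y\<in>S. u y * (a y)\<^sup>2)" and "C \<equiv> sqrt (\<Sum>y\<in>S. u y * (c y)\<^sup>2)"
  shows "\<exists>\<theta>. tL \<le> \<theta> \<and> \<theta> \<le> tU
    \<and> flow_from g b A C \<theta> \<le> (\<Sum>y\<in>S. u y * flow_from g b (a y) (c y) (t y))
    \<and> flow_to g b A C \<theta> \<le> (\<Sum>y\<in>S. u y * flow_to g b (a y) (c y) (t y))"
proof -
  define W where "W = (\<Sum>y\<in>S. u y * a y * c y)"
  define I where "I = (\<Sum>y\<in>S. u y * a y * c y * sin (t y))"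
  define R where "R = (\<Sum>y\<in>S. u y * a y * c y * cos (t y))"
  obtain y0 where "y0 \<in> S" "0 < u y0"
    using u sum_nonpos[of S u] by fastforce
  then have "0 < (\<Sum>y\<in>S. u y * (a y)\<^sup>2)" "0 < (\<Sum>y\<in>S. u y * (c y)\<^sup>2)"
    using \<open>finite S\<close> u(1) ac by (auto intro!: sum_pos2[of S y0])
  then have A2: "A\<^sup>2 = (\<Sum>y\<in>S. u y * (a y)\<^sup>2)" and C2: "C\<^sup>2 = (\<Sum>y\<in>S. u y * (c y)\<^sup>2)"
    and "0 < A * C" by (simp_all add: A_def C_def)
  have "W\<^sup>2 \<le> (A * C)\<^sup>2"
    unfolding W_def power_mult_distrib A2 C2 using u(1) by (rule weighted_Cauchy_Schwarz)
  then have "W \<le> A * C" using \<open>0 < A * C\<close> power2_le_imp_le[of W "A * C"] by simp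
  moreover have "sin tL \<le> 0" using sin_ge_zero[of "- tL"] tL by simp
  moreover have "0 \<le> sin tU" using sin_ge_zero[of tU] tU by simp
  moreover have "sin tL * W \<le> I" "I \<le> sin tU * W"
    unfolding W_def I_def using u(1) ac t tL tU
    by (intro sin_weighted_sum_between; simp add: less_imp_le)+
  ultimately have lower: "sin tL * (A * C) \<le> I" and upper: "I \<le> sin tU * (A * C)"
    by (smt (verit) mult_left_mono mult_left_mono_neg)+
  have "R\<^sup>2 + I\<^sup>2 \<le> (A * C)\<^sup>2"
    unfolding R_def I_def power_mult_distrib A2 C2 using u(1) by (rule weighted_cis_sum_bound)
  from arcsin_angle_between[OF \<open>0 < A * C\<close> this lower upper] tL tU
  obtain \<theta> where "tL \<le> \<theta>" "\<theta> \<le> tU" "A * C * sin \<theta> = I" "R \<le> A * C * cos \<theta>"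
    by fastforce
  moreover have "flow_from g b A C \<theta> = g * A\<^sup>2 + b * (A * C * sin \<theta>) - g * (A * C * cos \<theta>)"
    "flow_to g b A C \<theta> = g * C\<^sup>2 - b * (A * C * sin \<theta>) - g * (A * C * cos \<theta>)"
    unfolding flow_from_def flow_to_def by (simp_all add: algebra_simps)
  ultimately show ?thesis
    unfolding weighted_sum_flows A2 C2 I_def[symmetric] R_def[symmetric]
    using \<open>0 \<le> g\<close> by (intro exI[of _ \<theta>]) (auto intro: mult_left_mono)
qed

lemma injection_le_weighted_sum:
  fixes E :: "('n::finite \<times> 'n) set" and V :: "'a \<Rightarrow> real^'n"
  assumes "\<forall>(i,k)\<in>E. flow_from (g i k) (b i k) (v $ i) (v $ k) (th i k)
      \<le> (\<Sum>y\<in>S. u y * flow_from (g i k) (b i k) (V y $ i) (V y $ k) (Th y i k))"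
    and "\<forall>(i,k)\<in>E. flow_to (g i k) (b i k) (v $ i) (v $ k) (th i k)
      \<le> (\<Sum>y\<in>S. u y * flow_to (g i k) (b i k) (V y $ i) (V y $ k) (Th y i k))"
  shows "injection E g b v th \<le> (\<Sum>y\<in>S. u y *\<^sub>R injection E g b (V y) (Th y))"
  unfolding less_eq_vec_def
proof
  fix i
  have "injection E g b v th $ i
     \<le> (\<Sum>e\<in>{e\<in>E. fst e = i}. \<Sum>y\<in>S. u y * flow_from (g (fst e) (snd e)) (b (fst e) (snd e))
            (V y $ fst e) (V y $ snd e) (Th y (fst e) (snd e)))
      + (\<Sum>e\<in>{e\<in>E. snd e = i}. \<Sum>y\<in>S. u y * flow_to (g (fst e) (snd e)) (b (fst e) (snd e))
            (V y $ fst e) (V y $ snd e) (Th y (fst e) (snd e)))"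
    unfolding injection_def vec_lambda_beta using assms by (intro add_mono sum_mono) auto
  also have "\<dots> = (\<Sum>y\<in>S. u y *\<^sub>R injection E g b (V y) (Th y)) $ i"
    unfolding sum_component injection_def vector_scaleR_component vec_lambda_beta
    by (simp add: sum_distrib_left sum.distrib distrib_left sum.swap[of _ S])
  finally show "injection E g b v th $ i \<le> (\<Sum>y\<in>S. u y *\<^sub>R injection E g b (V y) (Th y)) $ i" .
qed

lemma injection_cong:
  assumes "\<forall>(i,k)\<in>E. th i k = th' i k"
  shows "injection E g b v th = injection E g b v th'"
proof -
  have "th (fst e) (snd e) = th' (fst e) (snd e)" if "e \<in> E" for e
    using assms that by auto
  then show ?thesis
    unfolding injection_def by (intro arg_cong[where f=vec_lambda] ext arg_cong2[where f="(+)"] sum.cong) auto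
qed

lemma mem_P_theta_iff:
  "p \<in> P_theta E g b thL thU vL vU \<longleftrightarrow> (\<exists>v th. vL \<le> v \<and> v \<le> vU
     \<and> (\<forall>(i,k)\<in>E. thL i k \<le> th i k \<and> th i k \<le> thU i k) \<and> p = injection E g b v th)"
  unfolding P_theta_def P_theta_v_def less_eq_vec_def by blast

lemma convex_hull_P_theta_dominated:
  fixes E :: "('n::finite \<times> 'n) set"
  assumes gb: "\<forall>(i,k)\<in>E. 0 \<le> g i k \<and> 0 \<le> b i k"
    and vL: "\<forall>i. 0 < vL $ i"
    and ang: "\<forall>(i,k)\<in>E. - (pi/2) \<le> thL i k \<and> thL i k \<le> 0 \<and> 0 \<le> thU i k \<and> thU i k \<le> pi/2"
    and z: "z \<in> convex hull (P_theta E g b thL thU vL vU)"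
  shows "\<exists>y\<in>P_theta E g b thL thU vL vU. y \<le> z"
proof -
  obtain S u where "finite S" and S: "S \<subseteq> P_theta E g b thL thU vL vU"
    and u: "\<forall>y\<in>S. 0 \<le> u y" "sum u S = 1" and z_eq: "(\<Sum>y\<in>S. u y *\<^sub>R y) = z"
    using z unfolding convex_hull_explicit by blast
  have "\<forall>y\<in>S. \<exists>v th. vL \<le> v \<and> v \<le> vU
     \<and> (\<forall>(i,k)\<in>E. thL i k \<le> th i k \<and> th i k \<le> thU i k) \<and> y = injection E g b v th"
    using S mem_P_theta_iff by blast
  from bchoice[OF this] obtain V where "\<forall>y\<in>S. \<exists>th. vL \<le> V y \<and> V y \<le> vU
     \<and> (\<forall>(i,k)\<in>E. thL i k \<le> th i k \<and> th i k \<le> thU i k) \<and> y = injection E g b (V y) th"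
    by blast
  from bchoice[OF this] obtain Th where "\<forall>y\<in>S. vL \<le> V y \<and> V y \<le> vU
     \<and> (\<forall>(i,k)\<in>E. thL i k \<le> Th y i k \<and> Th y i k \<le> thU i k) \<and> y = injection E g b (V y) (Th y)"
    by blast
  then have V: "\<forall>y\<in>S. vL \<le> V y \<and> V y \<le> vU"
    and Th: "\<forall>y\<in>S. \<forall>(i,k)\<in>E. thL i k \<le> Th y i k \<and> Th y i k \<le> thU i k"
    and y_eq: "\<forall>y\<in>S. y = injection E g b (V y) (Th y)"
    by auto
  have V_pos: "\<forall>y\<in>S. 0 < V y $ i" for i
    using V vL unfolding less_eq_vec_def by (meson less_le_trans)
  define v where "v = (\<chi> i. sqrt (\<Sum>y\<in>S. u y * (V y $ i)\<^sup>2))"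
  have "vL $ i \<le> v $ i \<and> v $ i \<le> vU $ i" for i
    unfolding v_def vec_lambda_beta using vL V
    by (intro quadratic_mean_between[OF u]) (auto simp: less_eq_vec_def less_imp_le)
  then have "vL \<le> v \<and> v \<le> vU" by (simp add: less_eq_vec_def)
  define averaging_angle where "averaging_angle i k \<theta> \<longleftrightarrow> thL i k \<le> \<theta> \<and> \<theta> \<le> thU i k
     \<and> flow_from (g i k) (b i k) (v $ i) (v $ k) \<theta>
         \<le> (\<Sum>y\<in>S. u y * flow_from (g i k) (b i k) (V y $ i) (V y $ k) (Th y i k))
     \<and> flow_to (g i k) (b i k) (v $ i) (v $ k) \<theta>
         \<le> (\<Sum>y\<in>S. u y * flow_to (g i k) (b i k) (V y $ i) (V y $ k) (Th y i k))" for i k \<theta>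
  have "\<exists>\<theta>. averaging_angle i k \<theta>" if "(i,k) \<in> E" for i k
    unfolding averaging_angle_def v_def vec_lambda_beta
    using \<open>finite S\<close> u V_pos Th ang gb that
    by (intro averaged_line_flows_dominated) auto
  then obtain th where "averaging_angle i k (th i k)" if "(i,k) \<in> E" for i k
    by metis
  then have th: "\<forall>(i,k)\<in>E. thL i k \<le> th i k \<and> th i k \<le> thU i k"
    and flows: "\<forall>(i,k)\<in>E. flow_from (g i k) (b i k) (v $ i) (v $ k) (th i k)
         \<le> (\<Sum>y\<in>S. u y * flow_from (g i k) (b i k) (V y $ i) (V y $ k) (Th y i k))"
      "\<forall>(i,k)\<in>E. flow_to (g i k) (b i k) (v $ i) (v $ k) (th i k)
         \<le> (\<Sum>y\<in>S. u y * flow_to (g i k) (b i k) (V y $ i) (V y $ k) (Th y i k))"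
    unfolding averaging_angle_def by auto
  have "injection E g b v th \<in> P_theta E g b thL thU vL vU"
    unfolding mem_P_theta_iff using \<open>vL \<le> v \<and> v \<le> vU\<close> th by blast
  moreover have "injection E g b v th \<le> z"
    using injection_le_weighted_sum[OF flows] y_eq z_eq by (simp cong: sum.cong)
  ultimately show ?thesis by blast
qed

lemma compact_P_theta_v:
  fixes E :: "('n::finite \<times> 'n) set"
  assumes "\<forall>(i,k)\<in>E. thL i k \<le> thU i k"
  shows "compact (P_theta_v E g b thL thU v)"
proof -
  define lo :: "real^('n \<times> 'n)" where "lo = (\<chi> e. if e \<in> E then thL (fst e) (snd e) else 0)"
  define hi :: "real^('n \<times> 'n)" where "hi = (\<chi> e. if e \<in> E then thU (fst e) (snd e) else 0)"
  define f where "f t = injection E g b v (\<lambda>i k. t $ (i,k))" for t :: "real^('n \<times> 'n)"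
  have "P_theta_v E g b thL thU v = f ` cbox lo hi"
  proof (intro set_eqI iffI)
    fix p assume "p \<in> P_theta_v E g b thL thU v"
    then obtain th where p: "p = injection E g b v th"
      and th: "\<forall>(i,k)\<in>E. thL i k \<le> th i k \<and> th i k \<le> thU i k"
      unfolding P_theta_v_def by blast
    define t :: "real^('n \<times> 'n)" where "t = (\<chi> e. if e \<in> E then th (fst e) (snd e) else 0)"
    have "t \<in> cbox lo hi" unfolding mem_box_cart t_def lo_def hi_def using th by auto
    moreover have "p = f t" unfolding p f_def by (rule injection_cong) (auto simp: t_def)
    ultimately show "p \<in> f ` cbox lo hi" by blast
  next
    fix p assume "p \<in> f ` cbox lo hi"
    then obtain t where t: "t \<in> cbox lo hi" and p: "p = f t" by blast
    have "\<forall>(i,k)\<in>E. thL i k \<le> t $ (i,k) \<and> t $ (i,k) \<le> thU i k"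
      using t unfolding mem_box_cart lo_def hi_def by (auto dest!: spec[where x="(_,_)"] split: if_splits)
    then show "p \<in> P_theta_v E g b thL thU v" unfolding P_theta_v_def p f_def by blast
  qed
  moreover have "continuous_on (cbox lo hi) f"
    unfolding f_def injection_def flow_from_def flow_to_def by (intro continuous_intros)
  ultimately show ?thesis by (simp add: compact_continuous_image)
qed

lemma P_theta_subset_relax: "P_theta E g b thL thU vL vU \<subseteq> P_theta_relax E g b thL thU vL vU"
  unfolding P_theta_def P_theta_relax_def
  by (intro UN_mono order_refl) (meson hull_subset closure_subset order_trans)

lemma P_theta_relax_subset_convex_hull:
  assumes "\<forall>(i,k)\<in>E. thL i k \<le> thU i k"
  shows "P_theta_relax E g b thL thU vL vU \<subseteq> convex hull (P_theta E g b thL thU vL vU)"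
  unfolding P_theta_relax_def
proof (rule UN_least)
  fix v assume "v \<in> {v. \<forall>i. vL $ i \<le> v $ i \<and> v $ i \<le> vU $ i}"
  then have "P_theta_v E g b thL thU v \<subseteq> P_theta E g b thL thU vL vU"
    unfolding P_theta_def by blast
  moreover have "closed (convex hull (P_theta_v E g b thL thU v))"
    using assms by (intro compact_imp_closed compact_convex_hull compact_P_theta_v)
  ultimately show "closure (convex hull (P_theta_v E g b thL thU v))
      \<subseteq> convex hull (P_theta E g b thL thU vL vU)"
    by (simp add: hull_mono)
qed

lemma P_P_eq_atMost: "P_P p = {..p}"
  unfolding P_P_def by (auto simp: less_eq_vec_def)

lemma pareto_iff: "x \<in> pareto A \<longleftrightarrow> x \<in> A \<and> (\<forall>y\<in>A. y \<le> x \<longrightarrow> y = x)"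
  unfolding pareto_def less_eq_vec_def vec_eq_iff by (auto simp: order.strict_iff_order)

lemma pareto_eq_if_dominated:
  assumes "S \<subseteq> T" and dominated: "\<forall>z\<in>T. \<exists>y\<in>S. y \<le> z"
  shows "pareto S = pareto T"
proof (intro set_eqI iffI)
  fix x assume x: "x \<in> pareto S"
  have "y = x" if "y \<in> T" "y \<le> x" for y
  proof -
    obtain y' where "y' \<in> S" "y' \<le> y" using dominated \<open>y \<in> T\<close> by blast
    then have "y' = x" using x \<open>y \<le> x\<close> unfolding pareto_iff by (blast intro: order.trans)
    then show "y = x" using \<open>y' \<le> y\<close> \<open>y \<le> x\<close> by simp
  qed
  then show "x \<in> pareto T" using x \<open>S \<subseteq> T\<close> unfolding pareto_iff by blast
next
  fix x assume x: "x \<in> pareto T"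
  then obtain y where "y \<in> S" "y \<le> x" using dominated unfolding pareto_iff by blast
  then have "y = x" using x \<open>S \<subseteq> T\<close> unfolding pareto_iff by blast
  then show "x \<in> pareto S" using x \<open>y \<in> S\<close> \<open>S \<subseteq> T\<close> unfolding pareto_iff by blast
qed

lemma pareto_eq_between:
  fixes T :: "(real^'n) set"
  assumes dominated: "\<forall>z\<in>convex hull T. \<exists>y\<in>T. y \<le> z"
    and lower: "T \<inter> {..p} \<subseteq> X" and upper: "X \<subseteq> convex hull T \<inter> {..p}"
  shows "pareto X = pareto (T \<inter> {..p})"
proof (rule sym, rule pareto_eq_if_dominated[OF lower], rule ballI)
  fix z assume "z \<in> X"
  then obtain y where "y \<in> T" "y \<le> z" "z \<le> p" using dominated upper by blast
  then show "\<exists>y\<in>T \<inter> {..p}. y \<le> z" by (blast intro: order.trans)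
qed

theorem theorem3:
  fixes E :: "('n::finite \<times> 'n) set"
    and g b thL thU :: "'n \<Rightarrow> 'n \<Rightarrow> real"
    and vL vU pU :: "real^'n"
  assumes tree: "is_tree E"
    and gb: "\<forall>(i,k)\<in>E. g i k \<ge> 0 \<and> b i k \<ge> 0"
    and volt: "\<forall>i. 0 < vL $ i \<and> vL $ i \<le> vU $ i"
    and ang: "\<forall>(i,k)\<in>E. thL i k \<le> 0 \<and> 0 \<le> thU i k
                 \<and> \<bar>thL i k\<bar> < pi / 2 \<and> \<bar>thU i k\<bar> < pi / 2"
  shows "pareto (P_theta E g b thL thU vL vU \<inter> P_P pU)
           = pareto (convex hull (P_theta E g b thL thU vL vU \<inter> P_P pU))
       \<and> pareto (convex hull (P_theta E g b thL thU vL vU \<inter> P_P pU))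
           = pareto (P_theta_relax E g b thL thU vL vU \<inter> P_P pU)"
proof -
  let ?T = "P_theta E g b thL thU vL vU"
  have ang': "\<forall>(i,k)\<in>E. - (pi/2) \<le> thL i k \<and> thL i k \<le> 0 \<and> 0 \<le> thU i k \<and> thU i k \<le> pi/2"
    using ang by (auto simp: abs_less_iff)
  have dominated: "\<forall>z\<in>convex hull ?T. \<exists>y\<in>?T. y \<le> z"
    using convex_hull_P_theta_dominated[OF gb _ ang'] volt by blast
  have "convex hull (?T \<inter> {..pU}) \<subseteq> convex hull ?T \<inter> {..pU}"
    by (intro hull_minimal convex_Int convex_convex_hull is_interval_convex is_interval_ic)
      (auto intro: hull_inc)
  then have hull: "pareto (convex hull (?T \<inter> {..pU})) = pareto (?T \<inter> {..pU})"
    by (intro pareto_eq_between[OF dominated] hull_subset)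
  have "P_theta_relax E g b thL thU vL vU \<subseteq> convex hull ?T"
    using ang' by (intro P_theta_relax_subset_convex_hull) auto
  then have relax: "pareto (P_theta_relax E g b thL thU vL vU \<inter> {..pU}) = pareto (?T \<inter> {..pU})"
    using P_theta_subset_relax[of E g b thL thU vL vU] by (intro pareto_eq_between[OF dominated]) auto
  show ?thesis unfolding P_P_eq_atMost hull relax by simp
qed

end
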